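(* Let $\mathbf A$ be a super-paraorthomodular lattice. Then for all $x,y\in A$, if $x\leq y$ then $y\land(y'\lor(x\land x'))=(y\land y')\lor(x\land x')$.
   Context: A pseudo-Kleene lattice is an algebra $(A,\land,\lor,{}',0,1)$ that is a bounded lattice with an antitone involution ${}'$ ($x\leq y\Rightarrow y'\leq x'$, $x''=x$) satisfying $x\land x'\leq y\lor y'$. It is super-paraorthomodular if for all $x,y$: (SP1) $x\leq y$ and $x'\land y=(x\land x')\lor(y\land y')$ imply $y\land(x\lor x')=x\lor(y\land y')$; (SP2) $x\leq y$ implies $(x\land x')\lor(y\land y')=(x'\land y)\land(x'\land y)'$. *)

theory Defs
  imports Main
begin

definition pseudo_kleene :: "('a::bounded_lattice \<Rightarrow> 'a) \<Rightarrow> bool" where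
  "pseudo_kleene c \<longleftrightarrow>
     (\<forall>x y. x \<le> y \<longrightarrow> c y \<le> c x) \<and>
     (\<forall>x. c (c x) = x) \<and>
     (\<forall>x y. inf x (c x) \<le> sup y (c y))"

definition super_paraorthomodular :: "('a::bounded_lattice \<Rightarrow> 'a) \<Rightarrow> bool" where
  "super_paraorthomodular c \<longleftrightarrow> pseudo_kleene c \<and>
     (\<forall>x y. x \<le> y \<and> inf (c x) y = sup (inf x (c x)) (inf y (c y))
        \<longrightarrow> inf y (sup x (c x)) = sup x (inf y (c y))) \<and>
     (\<forall>x y. x \<le> y \<longrightarrow>
        sup (inf x (c x)) (inf y (c y)) = inf (inf (c x) y) (c (inf (c x) y)))"

end

theory Submission
  imports Defs
begin

(* Put z = x' \<and> y. For x \<le> y the left-hand side lies below both z and z', hence below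
   z \<and> z', which (SP2) identifies with the right-hand side; the reverse inequality holds
   in every lattice. *)

lemma pseudo_kleene_antimono: "pseudo_kleene c \<Longrightarrow> antimono c"
  unfolding pseudo_kleene_def by (blast intro: antimonoI)

lemma pseudo_kleene_involutive: "pseudo_kleene c \<Longrightarrow> c (c x) = x"
  unfolding pseudo_kleene_def by blast

lemma super_paraorthomodular_pseudo_kleene:
  "super_paraorthomodular c \<Longrightarrow> pseudo_kleene c"
  unfolding super_paraorthomodular_def by blast

lemma super_paraorthomodularD2:
  assumes "super_paraorthomodular c" and "x \<le> y"
  shows "sup (inf x (c x)) (inf y (c y)) = inf (inf (c x) y) (c (inf (c x) y))"
  using assms unfolding super_paraorthomodular_def by blast

lemma antitone_involution_le_inf_compl:
  fixes c :: "'a::lattice \<Rightarrow> 'a"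
  assumes anti: "antimono c" and invol: "\<And>a. c (c a) = a" and "x \<le> y"
  defines "z \<equiv> inf (c x) y"
  shows "inf y (sup (c y) (inf x (c x))) \<le> inf z (c z)"
proof -
  have "c y \<le> c x" using anti \<open>x \<le> y\<close> by (rule antimonoD)
  then have below_cx: "sup (c y) (inf x (c x)) \<le> c x" by simp
  have "c (c x) \<le> c z" and cy_le: "c y \<le> c z"
    unfolding z_def using anti by (auto intro: antimonoD)
  then have "x \<le> c z" by (simp add: invol)
  then have below_cz: "sup (c y) (inf x (c x)) \<le> c z"
    using cy_le by (simp add: le_infI1)
  have "inf y (sup (c y) (inf x (c x))) \<le> z"
    unfolding z_def using below_cx by (auto intro: le_infI2)
  then show ?thesis
    using below_cz by (auto intro: le_infI2)
qed

theorem lemma3p3: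
  fixes c :: "'a::bounded_lattice \<Rightarrow> 'a"
  assumes "super_paraorthomodular c"
    and "x \<le> y"
  shows "inf y (sup (c y) (inf x (c x))) = sup (inf y (c y)) (inf x (c x))"
proof (rule antisym)
  have pk: "pseudo_kleene c"
    using assms(1) by (rule super_paraorthomodular_pseudo_kleene)
  have "inf y (sup (c y) (inf x (c x))) \<le> inf (inf (c x) y) (c (inf (c x) y))"
    using pseudo_kleene_antimono[OF pk] pseudo_kleene_involutive[OF pk] assms(2)
    by (rule antitone_involution_le_inf_compl)
  also have "\<dots> = sup (inf y (c y)) (inf x (c x))"
    using super_paraorthomodularD2[OF assms] by (simp add: sup_commute)
  finally show "inf y (sup (c y) (inf x (c x))) \<le> sup (inf y (c y)) (inf x (c x))" .
next
  have "inf x (c x) = inf y (inf x (c x))"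
    using assms(2) by (simp add: inf_absorb2 le_infI1)
  then show "sup (inf y (c y)) (inf x (c x)) \<le> inf y (sup (c y) (inf x (c x)))"
    by (metis distrib_inf_le)
qed

end
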